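(* Let $k\in L^1(0,\infty)$ be a probability density with $k(t)=t^rf(t)$, where $r>-1$, $f(0)\neq0$ and $f'(0)$ exists. Let $(X_n)$ be independent random variables each with density $k$, and $S_n=X_1+\dots+X_n$. Then $$\mathbf{P}(S_n\le1)\sim\frac{(f(0)\Gamma(r+1))^ne^{f'(0)/f(0)}}{\Gamma((r+1)n+1)}\quad\text{as }n\to\infty.$$
   Context: $a_n\sim b_n$ means $a_n/b_n\to1$. *)

theory Defs
  imports "HOL-Probability.Probability" "HOL-Library.Landau_Symbols"
begin

end

(*
  Write F_n(s) = P(S_n <= s), so that F_(n+1)(s) is the integral of k(y) F_n(s - y) dy. For the pure
  power density f0 y^r the Beta integral gives F_n exactly: (f0 Gamma(r+1))^n s^((r+1)n) / Gamma((r+1)n+1).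
  Near 0 the density k(y) lies between f0 y^r exp((c - eta) y) and f0 y^r exp((c + eta) y), c = f'(0)/f(0).
  The event that some summand exceeds delta has probability at most n P(S_(n-1) <= 1 - delta), and a
  Chernoff bound with exponent about (r+1)n makes it exponentially small compared with the main term.
  On the remaining event, replacing k by the tilted power density f0 y^r exp(a y) changes F_n(1) by the
  factor exp(a), up to exp(+-|a| eta) and an error from S_n < 1 - eta, whose relative weight
  (1 - eta)^((r+1)n) also vanishes. Letting eta -> 0 gives F_n(1) ~ exp(c) (f0 Gamma(r+1))^n / Gamma((r+1)n+1).
*)

theory Submission
  imports Defs "HOL-Real_Asymp.Real_Asymp"
begin

section \<open>Distribution functions of convolution powers\<close>

primrec conv_cdf :: "(real \<Rightarrow> ennreal) \<Rightarrow> nat \<Rightarrow> real \<Rightarrow> ennreal" where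
  "conv_cdf h 0 = indicator {0..}"
| "conv_cdf h (Suc n) = (\<lambda>s. \<integral>\<^sup>+y. h y * conv_cdf h n (s - y) \<partial>lborel)"

lemma conv_cdf_measurable [measurable]:
  assumes [measurable]: "h \<in> borel_measurable borel"
  shows "conv_cdf h n \<in> borel_measurable borel"
proof (induction n)
  case (Suc n)
  note [measurable] = Suc
  show ?case by simp measurable
qed simp

lemma conv_cdf_mono: "s \<le> s' \<Longrightarrow> conv_cdf h n s \<le> conv_cdf h n s'"
  by (induction n arbitrary: s s') (auto simp: indicator_def intro!: nn_integral_mono mult_left_mono)

lemma conv_cdf_eq_0:
  assumes "\<And>y. y \<le> 0 \<Longrightarrow> h y = 0" and "s < 0"
  shows "conv_cdf h n s = 0"
  using assms(2)
proof (induction n arbitrary: s)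
  case (Suc n)
  have "h y * conv_cdf h n (s - y) = 0" for y
    using Suc.IH[of "s - y"] Suc.prems by (cases "y \<le> 0") (auto simp: assms(1))
  then show ?case by (simp del: mult_eq_0_iff)
qed simp

lemma conv_cdf_mono_density:
  assumes "\<And>y. h y \<le> h' y"
  shows "conv_cdf h n s \<le> conv_cdf h' n s"
  by (induction n arbitrary: s) (auto intro!: nn_integral_mono mult_mono assms)

lemma conv_cdf_le_1:
  assumes "(\<integral>\<^sup>+y. h y \<partial>lborel) \<le> 1"
  shows "conv_cdf h n s \<le> 1"
proof (induction n arbitrary: s)
  case (Suc n)
  have "conv_cdf h (Suc n) s \<le> (\<integral>\<^sup>+y. h y \<partial>lborel)"
    unfolding conv_cdf.simps
    by (intro nn_integral_mono) (metis Suc mult.right_neutral mult_left_mono zero_le)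
  with assms show ?case by order
qed (simp add: indicator_def)

lemma ennreal_exp_mult: "ennreal (exp u) * ennreal (exp v) = ennreal (exp (u + v))"
  by (simp add: ennreal_mult' [symmetric] exp_add)

lemma conv_cdf_chernoff:
  assumes "l \<ge> 0" and [measurable]: "h \<in> borel_measurable borel"
  shows "conv_cdf h n s \<le> ennreal (exp (l * s)) * (\<integral>\<^sup>+y. h y * ennreal (exp (-l * y)) \<partial>lborel) ^ n"
proof (induction n arbitrary: s)
  case 0
  then show ?case using assms by (auto simp: indicator_def)
next
  case (Suc n)
  let ?L = "\<integral>\<^sup>+y. h y * ennreal (exp (-l * y)) \<partial>lborel"
  have "conv_cdf h (Suc n) s \<le> (\<integral>\<^sup>+y. h y * (ennreal (exp (l * (s - y))) * ?L ^ n) \<partial>lborel)"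
    using Suc by (auto intro!: nn_integral_mono mult_left_mono)
  also have "\<dots> = (\<integral>\<^sup>+y. (ennreal (exp (l * s)) * ?L ^ n) * (h y * ennreal (exp (-l * y))) \<partial>lborel)"
  proof (intro nn_integral_cong)
    fix y
    have "ennreal (exp (l * (s - y))) = ennreal (exp (l * s)) * ennreal (exp (-l * y))"
      by (simp add: ennreal_exp_mult algebra_simps)
    then show "h y * (ennreal (exp (l * (s - y))) * ?L ^ n) = (ennreal (exp (l * s)) * ?L ^ n) * (h y * ennreal (exp (-l * y)))"
      by (simp add: mult_ac)
  qed
  also have "\<dots> = ennreal (exp (l * s)) * ?L ^ n * ?L"
    by (subst nn_integral_cmult) auto
  finally show ?case by (simp add: mult_ac)
qed

lemma conv_cdf_Suc_split:
  assumes [measurable]: "h \<in> borel_measurable borel" and "\<And>y. y \<le> 0 \<Longrightarrow> h y = 0" and "s \<le> 1"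
  shows "conv_cdf h (Suc n) s \<le> (\<integral>\<^sup>+y. h y * indicator {..<\<delta>} y * conv_cdf h n (s - y) \<partial>lborel)
           + (\<integral>\<^sup>+y. h y * indicator {\<delta>..1} y \<partial>lborel) * conv_cdf h n (s - \<delta>)"
proof -
  have "conv_cdf h (Suc n) s = (\<integral>\<^sup>+y. h y * indicator {..<\<delta>} y * conv_cdf h n (s - y)
           + h y * indicator {\<delta>..} y * conv_cdf h n (s - y) \<partial>lborel)"
    by (auto simp: indicator_def intro!: nn_integral_cong)
  also have "\<dots> = (\<integral>\<^sup>+y. h y * indicator {..<\<delta>} y * conv_cdf h n (s - y) \<partial>lborel)
           + (\<integral>\<^sup>+y. h y * indicator {\<delta>..} y * conv_cdf h n (s - y) \<partial>lborel)"
    by (rule nn_integral_add) measurable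
  also have "(\<integral>\<^sup>+y. h y * indicator {\<delta>..} y * conv_cdf h n (s - y) \<partial>lborel)
      \<le> (\<integral>\<^sup>+y. h y * indicator {\<delta>..1} y * conv_cdf h n (s - \<delta>) \<partial>lborel)"
  proof (intro nn_integral_mono)
    fix y
    consider "y < \<delta>" | "y > s" | "\<delta> \<le> y" "y \<le> s" by linarith
    then show "h y * indicator {\<delta>..} y * conv_cdf h n (s - y) \<le> h y * indicator {\<delta>..1} y * conv_cdf h n (s - \<delta>)"
    proof cases
      case 2
      then show ?thesis using conv_cdf_eq_0[of h "s - y"] assms(2) by simp
    next
      case 3
      then show ?thesis using assms(3) by (auto simp: indicator_def intro!: mult_left_mono conv_cdf_mono)
    qed (simp add: indicator_def)
  qed
  also have "\<dots> = (\<integral>\<^sup>+y. h y * indicator {\<delta>..1} y \<partial>lborel) * conv_cdf h n (s - \<delta>)"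
    by (rule nn_integral_multc) measurable
  finally show ?thesis by (simp add: add_left_mono)
qed

text \<open>A union bound over the summand that is at least \<open>\<delta>\<close>.\<close>

lemma conv_cdf_split:
  assumes [measurable]: "h \<in> borel_measurable borel" and supp: "\<And>y. y \<le> 0 \<Longrightarrow> h y = 0" and "s \<le> 1"
  shows "conv_cdf h (Suc n) s \<le> conv_cdf (\<lambda>y. h y * indicator {..<\<delta>} y) (Suc n) s
           + of_nat (Suc n) * (\<integral>\<^sup>+y. h y * indicator {\<delta>..1} y \<partial>lborel) * conv_cdf h n (s - \<delta>)"
  using assms(3)
proof (induction n arbitrary: s)
  case 0
  then show ?case using conv_cdf_Suc_split[OF assms(1,2), of s 0 \<delta>] by simp
next
  case (Suc n)
  let ?h1 = "\<lambda>y. h y * indicator {..<\<delta>} y"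
  let ?K = "\<integral>\<^sup>+y. h y * indicator {\<delta>..1} y \<partial>lborel"
  have "conv_cdf h (Suc (Suc n)) s \<le> (\<integral>\<^sup>+y. ?h1 y * conv_cdf h (Suc n) (s - y) \<partial>lborel)
           + ?K * conv_cdf h (Suc n) (s - \<delta>)"
    by (rule conv_cdf_Suc_split[OF assms(1,2) Suc.prems])
  also have "(\<integral>\<^sup>+y. ?h1 y * conv_cdf h (Suc n) (s - y) \<partial>lborel)
      \<le> (\<integral>\<^sup>+y. ?h1 y * conv_cdf ?h1 (Suc n) (s - y)
          + of_nat (Suc n) * ?K * (?h1 y * conv_cdf h n (s - \<delta> - y)) \<partial>lborel)"
  proof (intro nn_integral_mono)
    fix y
    show "?h1 y * conv_cdf h (Suc n) (s - y)
        \<le> ?h1 y * conv_cdf ?h1 (Suc n) (s - y) + of_nat (Suc n) * ?K * (?h1 y * conv_cdf h n (s - \<delta> - y))"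
    proof (cases "y \<le> 0")
      case False
      then have "?h1 y * conv_cdf h (Suc n) (s - y)
          \<le> ?h1 y * (conv_cdf ?h1 (Suc n) (s - y) + of_nat (Suc n) * ?K * conv_cdf h n (s - y - \<delta>))"
        using Suc by (intro mult_left_mono) auto
      then show ?thesis by (simp add: distrib_left mult_ac diff_diff_eq add.commute)
    qed (simp add: supp)
  qed
  also have "\<dots> = conv_cdf ?h1 (Suc (Suc n)) s
      + of_nat (Suc n) * ?K * (\<integral>\<^sup>+y. ?h1 y * conv_cdf h n (s - \<delta> - y) \<partial>lborel)"
    by (simp add: nn_integral_add nn_integral_cmult)
  also have "(\<integral>\<^sup>+y. ?h1 y * conv_cdf h n (s - \<delta> - y) \<partial>lborel) \<le> conv_cdf h (Suc n) (s - \<delta>)"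
    by (simp, intro nn_integral_mono mult_right_mono) (auto simp: indicator_def)
  finally have "conv_cdf h (Suc (Suc n)) s \<le> conv_cdf ?h1 (Suc (Suc n)) s
      + (of_nat (Suc n) * ?K * conv_cdf h (Suc n) (s - \<delta>) + ?K * conv_cdf h (Suc n) (s - \<delta>))"
    by (simp add: add_mono mult_left_mono add.assoc)
  also have "of_nat (Suc n) * ?K * conv_cdf h (Suc n) (s - \<delta>) + ?K * conv_cdf h (Suc n) (s - \<delta>)
      = of_nat (Suc (Suc n)) * ?K * conv_cdf h (Suc n) (s - \<delta>)"
    by (simp only: of_nat_Suc[of "Suc n"] distrib_right mult_1_left add.commute)
  finally show ?case .
qed

text \<open>Exponential tilting: for a sum \<open>S \<in> [s - \<epsilon>, s]\<close> the weight \<open>exp (a S)\<close> is within a factor \<open>exp (\<bar>a\<bar> \<epsilon>)\<close>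
  of \<open>exp (a s)\<close>, and for \<open>S \<in> [0, s]\<close> it is at most \<open>exp (\<bar>a\<bar> s)\<close>.\<close>

lemma conv_cdf_tilt_upper:
  assumes [measurable]: "p \<in> borel_measurable borel" and supp: "\<And>y. y \<le> 0 \<Longrightarrow> p y = 0"
    and "\<epsilon> \<ge> 0"
  shows "conv_cdf (\<lambda>y. p y * ennreal (exp (a * y))) n s
     \<le> ennreal (exp (a * s + \<bar>a\<bar> * \<epsilon>)) * conv_cdf p n s
         + ennreal (exp (\<bar>a\<bar> * s)) * conv_cdf p n (s - \<epsilon>)"
proof (induction n arbitrary: s)
  case 0
  show ?case
  proof (cases "s < 0")
    case True then show ?thesis by simp
  next
    case False
    show ?thesis
    proof (cases "s \<ge> \<epsilon>")
      case True
      have "1 \<le> ennreal (exp (\<bar>a\<bar> * s))" using False by simp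
      with True False show ?thesis by (simp add: indicator_def add_increasing)
    next
      case False2: False
      have "a * s + \<bar>a\<bar> * \<epsilon> \<ge> 0"
      proof -
        have "a * s \<ge> - \<bar>a\<bar> * s" using False by (cases "a \<ge> 0") auto
        moreover have "\<bar>a\<bar> * s \<le> \<bar>a\<bar> * \<epsilon>" using False2 by (intro mult_left_mono) auto
        ultimately show ?thesis by linarith
      qed
      then have "1 \<le> ennreal (exp (a * s + \<bar>a\<bar> * \<epsilon>))" by simp
      with False show ?thesis by (simp add: indicator_def add_increasing2)
    qed
  qed
next
  case (Suc n)
  let ?g = "\<lambda>y. p y * ennreal (exp (a * y))"
  have "conv_cdf ?g (Suc n) s \<le> (\<integral>\<^sup>+y. ?g y
      * (ennreal (exp (a * (s - y) + \<bar>a\<bar> * \<epsilon>)) * conv_cdf p n (s - y)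
           + ennreal (exp (\<bar>a\<bar> * (s - y))) * conv_cdf p n (s - y - \<epsilon>)) \<partial>lborel)"
    using Suc by (auto intro!: nn_integral_mono mult_left_mono)
  also have "\<dots> \<le> (\<integral>\<^sup>+y. ennreal (exp (a * s + \<bar>a\<bar> * \<epsilon>)) * (p y * conv_cdf p n (s - y))
           + ennreal (exp (\<bar>a\<bar> * s)) * (p y * conv_cdf p n (s - \<epsilon> - y)) \<partial>lborel)"
  proof (intro nn_integral_mono)
    fix y
    show "?g y * (ennreal (exp (a * (s - y) + \<bar>a\<bar> * \<epsilon>)) * conv_cdf p n (s - y)
           + ennreal (exp (\<bar>a\<bar> * (s - y))) * conv_cdf p n (s - y - \<epsilon>))
        \<le> ennreal (exp (a * s + \<bar>a\<bar> * \<epsilon>)) * (p y * conv_cdf p n (s - y))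
           + ennreal (exp (\<bar>a\<bar> * s)) * (p y * conv_cdf p n (s - \<epsilon> - y))"
    proof (cases "y \<le> 0")
      case True then show ?thesis by (simp add: supp)
    next
      case False
      have e1: "ennreal (exp (a * y)) * ennreal (exp (a * (s - y) + \<bar>a\<bar> * \<epsilon>))
          = ennreal (exp (a * s + \<bar>a\<bar> * \<epsilon>))"
        by (simp add: ennreal_exp_mult algebra_simps)
      have "a * y \<le> \<bar>a\<bar> * y" using False by (intro mult_right_mono) auto
      then have "a * y + \<bar>a\<bar> * (s - y) \<le> \<bar>a\<bar> * s"
        by (simp add: algebra_simps)
      then have e2: "ennreal (exp (a * y)) * ennreal (exp (\<bar>a\<bar> * (s - y))) \<le> ennreal (exp (\<bar>a\<bar> * s))"
        by (simp add: ennreal_exp_mult)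
      have "?g y * (ennreal (exp (a * (s - y) + \<bar>a\<bar> * \<epsilon>)) * conv_cdf p n (s - y)
           + ennreal (exp (\<bar>a\<bar> * (s - y))) * conv_cdf p n (s - y - \<epsilon>))
          = (ennreal (exp (a * y)) * ennreal (exp (a * (s - y) + \<bar>a\<bar> * \<epsilon>))) * (p y * conv_cdf p n (s - y))
           + (ennreal (exp (a * y)) * ennreal (exp (\<bar>a\<bar> * (s - y)))) * (p y * conv_cdf p n (s - \<epsilon> - y))"
        by (simp add: distrib_left mult_ac diff_diff_eq add.commute)
      also have "\<dots> \<le> ennreal (exp (a * s + \<bar>a\<bar> * \<epsilon>)) * (p y * conv_cdf p n (s - y))
           + ennreal (exp (\<bar>a\<bar> * s)) * (p y * conv_cdf p n (s - \<epsilon> - y))"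
        unfolding e1 by (intro add_left_mono mult_right_mono e2) auto
      finally show ?thesis .
    qed
  qed
  also have "\<dots> = ennreal (exp (a * s + \<bar>a\<bar> * \<epsilon>)) * conv_cdf p (Suc n) s
      + ennreal (exp (\<bar>a\<bar> * s)) * conv_cdf p (Suc n) (s - \<epsilon>)"
    by (simp add: nn_integral_add nn_integral_cmult)
  finally show ?case .
qed

lemma conv_cdf_tilt_lower:
  assumes [measurable]: "p \<in> borel_measurable borel" and supp: "\<And>y. y \<le> 0 \<Longrightarrow> p y = 0"
    and "\<epsilon> \<ge> 0"
  shows "ennreal (exp (a * s - \<bar>a\<bar> * \<epsilon>)) * conv_cdf p n s
     \<le> conv_cdf (\<lambda>y. p y * ennreal (exp (a * y))) n s + ennreal (exp (\<bar>a\<bar> * s)) * conv_cdf p n (s - \<epsilon>)"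
proof (induction n arbitrary: s)
  case 0
  show ?case
  proof (cases "s < 0")
    case True then show ?thesis by simp
  next
    case False
    show ?thesis
    proof (cases "s \<ge> \<epsilon>")
      case True
      have "a * s - \<bar>a\<bar> * \<epsilon> \<le> \<bar>a\<bar> * s"
      proof -
        have "a * s \<le> \<bar>a\<bar> * s" using False by (intro mult_right_mono) auto
        moreover have "\<bar>a\<bar> * \<epsilon> \<ge> 0" using \<open>\<epsilon> \<ge> 0\<close> by simp
        ultimately show ?thesis by linarith
      qed
      then have "ennreal (exp (a * s - \<bar>a\<bar> * \<epsilon>)) \<le> ennreal (exp (\<bar>a\<bar> * s))" by simp
      with True False show ?thesis by (simp add: indicator_def add_increasing)
    next
      case False2: False
      have "a * s - \<bar>a\<bar> * \<epsilon> \<le> 0"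
      proof -
        have "a * s \<le> \<bar>a\<bar> * s" using False by (intro mult_right_mono) auto
        moreover have "\<bar>a\<bar> * s \<le> \<bar>a\<bar> * \<epsilon>" using False2 by (intro mult_left_mono) auto
        ultimately show ?thesis by linarith
      qed
      then have "ennreal (exp (a * s - \<bar>a\<bar> * \<epsilon>)) \<le> 1" by simp
      with False False2 show ?thesis by (simp add: indicator_def)
    qed
  qed
next
  case (Suc n)
  let ?g = "\<lambda>y. p y * ennreal (exp (a * y))"
  have "ennreal (exp (a * s - \<bar>a\<bar> * \<epsilon>)) * conv_cdf p (Suc n) s
      = (\<integral>\<^sup>+y. ennreal (exp (a * y)) * p y
          * (ennreal (exp (a * (s - y) - \<bar>a\<bar> * \<epsilon>)) * conv_cdf p n (s - y)) \<partial>lborel)"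
    by (simp flip: nn_integral_cmult, intro nn_integral_cong) (simp add: mult_ac ennreal_exp_mult algebra_simps)
  also have "\<dots> \<le> (\<integral>\<^sup>+y. ennreal (exp (a * y)) * p y * (conv_cdf ?g n (s - y)
           + ennreal (exp (\<bar>a\<bar> * (s - y))) * conv_cdf p n (s - y - \<epsilon>)) \<partial>lborel)"
    using Suc by (auto intro!: nn_integral_mono mult_left_mono)
  also have "\<dots> \<le> (\<integral>\<^sup>+y. ?g y * conv_cdf ?g n (s - y)
           + ennreal (exp (\<bar>a\<bar> * s)) * (p y * conv_cdf p n (s - \<epsilon> - y)) \<partial>lborel)"
  proof (intro nn_integral_mono)
    fix y
    show "ennreal (exp (a * y)) * p y * (conv_cdf ?g n (s - y)
           + ennreal (exp (\<bar>a\<bar> * (s - y))) * conv_cdf p n (s - y - \<epsilon>))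
        \<le> ?g y * conv_cdf ?g n (s - y)
           + ennreal (exp (\<bar>a\<bar> * s)) * (p y * conv_cdf p n (s - \<epsilon> - y))"
    proof (cases "y \<le> 0")
      case True then show ?thesis by (simp add: supp)
    next
      case False
      have "a * y \<le> \<bar>a\<bar> * y" using False by (intro mult_right_mono) auto
      then have "a * y + \<bar>a\<bar> * (s - y) \<le> \<bar>a\<bar> * s"
        by (simp add: algebra_simps)
      then have e2: "ennreal (exp (a * y)) * ennreal (exp (\<bar>a\<bar> * (s - y))) \<le> ennreal (exp (\<bar>a\<bar> * s))"
        by (simp add: ennreal_exp_mult)
      have "ennreal (exp (a * y)) * p y * (conv_cdf ?g n (s - y)
           + ennreal (exp (\<bar>a\<bar> * (s - y))) * conv_cdf p n (s - y - \<epsilon>))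
          = ?g y * conv_cdf ?g n (s - y)
           + (ennreal (exp (a * y)) * ennreal (exp (\<bar>a\<bar> * (s - y)))) * (p y * conv_cdf p n (s - \<epsilon> - y))"
        by (simp add: distrib_left mult_ac diff_diff_eq add.commute)
      also have "\<dots> \<le> ?g y * conv_cdf ?g n (s - y)
           + ennreal (exp (\<bar>a\<bar> * s)) * (p y * conv_cdf p n (s - \<epsilon> - y))"
        by (intro add_left_mono mult_right_mono e2) auto
      finally show ?thesis .
    qed
  qed
  also have "\<dots> = conv_cdf ?g (Suc n) s + ennreal (exp (\<bar>a\<bar> * s)) * conv_cdf p (Suc n) (s - \<epsilon>)"
    by (simp add: nn_integral_add nn_integral_cmult)
  finally show ?case .
qed

section \<open>The pure power density\<close>

lemma nn_integral_Beta_scaled: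
  fixes s \<alpha> b :: real
  assumes "s > 0" "\<alpha> > 0" "b > 0"
  shows "(\<integral>\<^sup>+y. ennreal (indicator {0<..<s} y * (y powr (\<alpha> - 1) * (s - y) powr (b - 1))) \<partial>lborel)
         = ennreal (s powr (\<alpha> + b - 1) * Beta \<alpha> b)"
proof -
  have hi: "((\<lambda>t. t powr (\<alpha> - 1) * (1 - t) powr (b - 1)) has_integral Beta \<alpha> b) {0<..<1}"
    using has_integral_Beta_real[OF assms(2,3)] by (simp add: has_integral_Icc_iff_Ioo)
  have B1: "(\<integral>\<^sup>+t. ennreal (indicator {0<..<1} t
      * (t powr (\<alpha> - 1) * (1 - t) powr (b - 1))) \<partial>lborel) = ennreal (Beta \<alpha> b)"
    using nn_integral_has_integral_lebesgue[OF _ hi] by simp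
  have "(\<integral>\<^sup>+y. ennreal (indicator {0<..<s} y * (y powr (\<alpha> - 1) * (s - y) powr (b - 1))) \<partial>lborel)
      = ennreal \<bar>s\<bar> * (\<integral>\<^sup>+t. ennreal (indicator {0<..<s} (0 + s * t)
          * ((0 + s * t) powr (\<alpha> - 1) * (s - (0 + s * t)) powr (b - 1))) \<partial>lborel)"
    using assms by (intro nn_integral_real_affine) auto
  also have "(\<integral>\<^sup>+t. ennreal (indicator {0<..<s} (0 + s * t)
      * ((0 + s * t) powr (\<alpha> - 1) * (s - (0 + s * t)) powr (b - 1))) \<partial>lborel)
      = (\<integral>\<^sup>+t. ennreal (s powr (\<alpha> + b - 2))
          * ennreal (indicator {0<..<1} t * (t powr (\<alpha> - 1) * (1 - t) powr (b - 1))) \<partial>lborel)"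
  proof (intro nn_integral_cong)
    fix t :: real
    show "ennreal (indicator {0<..<s} (0 + s * t) * ((0 + s * t) powr (\<alpha> - 1) * (s - (0 + s * t)) powr (b - 1)))
       = ennreal (s powr (\<alpha> + b - 2)) * ennreal (indicator {0<..<1} t * (t powr (\<alpha> - 1) * (1 - t) powr (b - 1)))"
    proof (cases "0 < t \<and> t < 1")
      case True
      have "s - s * t = s * (1 - t)" by (simp add: algebra_simps)
      moreover have "s powr (\<alpha> - 1) * s powr (b - 1) = s powr (\<alpha> + b - 2)"
        by (simp add: powr_add [symmetric])
      ultimately show ?thesis using True assms
        by (simp add: powr_mult ennreal_mult' [symmetric] mult_ac)
    next
      case False
      then have "\<not> (0 < s * t \<and> s * t < s)" using assms
        by (auto simp: mult_less_cancel_left1 zero_less_mult_iff)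
      then have "indicator {0<..<s} (0 + s * t) = (0::real)" by (simp add: indicator_def)
      moreover have "indicator {0<..<1} t = (0::real)" using False by (simp add: indicator_def)
      ultimately show ?thesis by simp
    qed
  qed
  also have "\<dots> = ennreal (s powr (\<alpha> + b - 2)) * ennreal (Beta \<alpha> b)"
    by (subst nn_integral_cmult) (auto simp: B1)
  also have "s * s powr (\<alpha> + b - 2) = s powr (\<alpha> + b - 1)"
    using assms by (simp add: powr_add [symmetric] powr_mult_base)
  hence "ennreal \<bar>s\<bar> * (ennreal (s powr (\<alpha> + b - 2)) * ennreal (Beta \<alpha> b))
      = ennreal (s powr (\<alpha> + b - 1) * Beta \<alpha> b)"
    using assms by (simp add: ennreal_mult' [symmetric] mult.assoc [symmetric] Beta_def)
  finally show ?thesis .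
qed

definition power_density :: "real \<Rightarrow> real \<Rightarrow> real \<Rightarrow> ennreal" where
  "power_density f0 r y = (if 0 < y then ennreal (f0 * y powr r) else 0)"

text \<open>The case \<open>n = 0\<close> is separate because \<open>conv_cdf h 0\<close> equals 1 at \<open>s = 0\<close>.\<close>

definition power_conv_cdf :: "real \<Rightarrow> real \<Rightarrow> nat \<Rightarrow> real \<Rightarrow> real" where
  "power_conv_cdf f0 r n s = (if n = 0 then indicator {0..} s else if s \<le> 0 then 0
      else (f0 * Gamma (r + 1)) ^ n * s powr ((r + 1) * real n) / Gamma ((r + 1) * real n + 1))"

lemma power_density_measurable[measurable]: "power_density f0 r \<in> borel_measurable borel"
  unfolding power_density_def by measurable

lemma power_density_eq_0: "y \<le> 0 \<Longrightarrow> power_density f0 r y = 0"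
  by (simp add: power_density_def)

lemma power_conv_cdf_pos: "s > 0 \<Longrightarrow> power_conv_cdf f0 r n s
    = (f0 * Gamma (r + 1)) ^ n * s powr ((r + 1) * real n) / Gamma ((r + 1) * real n + 1)"
  by (simp add: power_conv_cdf_def)

lemma power_conv_cdf_nonneg: "f0 > 0 \<Longrightarrow> r > -1 \<Longrightarrow> power_conv_cdf f0 r n s \<ge> 0"
  by (auto simp: power_conv_cdf_def Gamma_real_pos intro!: divide_nonneg_pos Gamma_real_pos add_nonneg_pos)

lemma power_conv_cdf_at_1: "power_conv_cdf f0 r n 1 = (f0 * Gamma (r + 1)) ^ n / Gamma ((r + 1) * real n + 1)"
  by (simp add: power_conv_cdf_pos)

lemma power_conv_cdf_at_1_pos: "f0 > 0 \<Longrightarrow> r > -1 \<Longrightarrow> power_conv_cdf f0 r n 1 > 0"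
  by (simp add: power_conv_cdf_at_1 Gamma_real_pos add_nonneg_pos)

lemma power_conv_cdf_scale: "t > 0 \<Longrightarrow> power_conv_cdf f0 r n t = t powr ((r + 1) * real n) * power_conv_cdf f0 r n 1"
  by (simp add: power_conv_cdf_pos)

lemma nn_integral_power_density_convolution:
  assumes f0: "f0 > 0" and r: "r > -1"
  shows "(\<integral>\<^sup>+y. power_density f0 r y * ennreal (power_conv_cdf f0 r n (s - y)) \<partial>lborel)
    = ennreal (power_conv_cdf f0 r (Suc n) s)"
proof -
  define A where "A = f0 * Gamma (r + 1)"
  define C where "C = f0 * A ^ n / Gamma ((r + 1) * real n + 1)"
  have rn: "(r + 1) * real n \<ge> 0" using r by simp
  have Gpos: "Gamma ((r + 1) * real n + 1) > 0" using rn by (intro Gamma_real_pos) linarith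
  have Apos: "A > 0" using f0 r by (simp add: A_def Gamma_real_pos)
  have Cpos: "C \<ge> 0" using f0 Apos Gpos by (simp add: C_def)
  show ?thesis
  proof (cases "s \<le> 0")
    case True
    have z: "\<And>y. power_density f0 r y * ennreal (power_conv_cdf f0 r n (s - y)) = 0"
      using True by (auto simp: power_density_def power_conv_cdf_def indicator_def)
    have "(\<integral>\<^sup>+y. power_density f0 r y * ennreal (power_conv_cdf f0 r n (s - y)) \<partial>lborel) = 0"
      unfolding z by simp
    then show ?thesis using True by (simp add: power_conv_cdf_def)
  next
    case False
    then have s: "s > 0" by simp
    have "(\<integral>\<^sup>+y. power_density f0 r y * ennreal (power_conv_cdf f0 r n (s - y)) \<partial>lborel)
        = (\<integral>\<^sup>+y. ennreal C
            * ennreal (indicator {0<..<s} y * (y powr ((r + 1) - 1) * (s - y) powr (((r + 1) * real n + 1) - 1))) \<partial>lborel)"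
    proof (intro nn_integral_cong_AE eventually_mono[OF AE_lborel_singleton[of s]])
      fix y assume "y \<noteq> s"
      show "power_density f0 r y * ennreal (power_conv_cdf f0 r n (s - y))
          = ennreal C * ennreal (indicator {0<..<s} y * (y powr ((r + 1) - 1) * (s - y) powr (((r + 1) * real n + 1) - 1)))"
      proof (cases "0 < y \<and> y < s")
        case True
        have "power_conv_cdf f0 r n (s - y) = A ^ n * (s - y) powr ((r + 1) * real n) / Gamma ((r + 1) * real n + 1)"
          using True by (simp add: power_conv_cdf_pos A_def)
        then have "power_density f0 r y * ennreal (power_conv_cdf f0 r n (s - y))
            = ennreal (f0 * y powr r * (A ^ n * (s - y) powr ((r + 1) * real n) / Gamma ((r + 1) * real n + 1)))"
          using True f0 by (simp add: power_density_def ennreal_mult' [symmetric])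
        also have "f0 * y powr r * (A ^ n * (s - y) powr ((r + 1) * real n) / Gamma ((r + 1) * real n + 1))
            = C * (indicator {0<..<s} y * (y powr ((r + 1) - 1) * (s - y) powr (((r + 1) * real n + 1) - 1)))"
          using True by (simp add: C_def)
        finally show ?thesis using Cpos by (simp add: ennreal_mult' [symmetric])
      next
        case False
        then have "y \<le> 0 \<or> y > s" using \<open>y \<noteq> s\<close> by auto
        then show ?thesis
        proof
          assume "y \<le> 0" then show ?thesis using False by (simp add: power_density_def indicator_def)
        next
          assume "y > s" then show ?thesis using False by (simp add: power_conv_cdf_def indicator_def)
        qed
      qed
    qed
    also have "\<dots> = ennreal C * ennreal (s powr ((r + 1) + ((r + 1) * real n + 1) - 1) * Beta (r + 1) ((r + 1) * real n + 1))"
    proof -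
      have bs: "(\<integral>\<^sup>+y. ennreal (indicator {0<..<s} y
          * (y powr ((r + 1) - 1) * (s - y) powr (((r + 1) * real n + 1) - 1))) \<partial>lborel)
         = ennreal (s powr ((r + 1) + ((r + 1) * real n + 1) - 1) * Beta (r + 1) ((r + 1) * real n + 1))"
        by (rule nn_integral_Beta_scaled) (use s r rn in linarith)+
      show ?thesis using bs by (simp add: nn_integral_cmult)
    qed
    also have "\<dots> = ennreal (power_conv_cdf f0 r (Suc n) s)"
    proof -
      have "Gamma ((r + 1) * real n + 1 + (r + 1)) = Gamma ((r + 1) * real (Suc n) + 1)"
        by (simp add: algebra_simps)
      then have "C * (s powr ((r + 1) + ((r + 1) * real n + 1) - 1) * Beta (r + 1) ((r + 1) * real n + 1))
          = power_conv_cdf f0 r (Suc n) s"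
        using s Gpos by (simp add: power_conv_cdf_pos C_def A_def Beta_def field_simps add_ac)
      then show ?thesis using Cpos by (simp add: ennreal_mult' [symmetric])
    qed
    finally show ?thesis .
  qed
qed

lemma conv_cdf_power_density:
  assumes "f0 > 0" and "r > -1"
  shows "conv_cdf (power_density f0 r) n s = ennreal (power_conv_cdf f0 r n s)"
proof (induction n arbitrary: s)
  case (Suc n)
  then show ?case by (simp add: nn_integral_power_density_convolution[OF assms])
qed (simp add: power_conv_cdf_def indicator_def)

lemma nn_integral_power_density_exp:
  assumes f0: "f0 \<ge> 0" and r: "r > -1" and mu: "\<mu> > 0"
  shows "(\<integral>\<^sup>+y. power_density f0 r y * ennreal (exp (-\<mu> * y)) \<partial>lborel)
      = ennreal (f0 * Gamma (r + 1) * \<mu> powr (-(r + 1)))"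
proof -
  have "(\<integral>\<^sup>+y. power_density f0 r y * ennreal (exp (-\<mu> * y)) \<partial>lborel)
      = ennreal \<bar>1 / \<mu>\<bar> * (\<integral>\<^sup>+t. power_density f0 r (0 + 1 / \<mu> * t)
          * ennreal (exp (-\<mu> * (0 + 1 / \<mu> * t))) \<partial>lborel)"
    using mu by (intro nn_integral_real_affine) auto
  also have "(\<integral>\<^sup>+t. power_density f0 r (0 + 1 / \<mu> * t) * ennreal (exp (-\<mu> * (0 + 1 / \<mu> * t))) \<partial>lborel)
      = (\<integral>\<^sup>+t. ennreal (f0 * \<mu> powr (-r)) * ennreal (indicator {0..} t * t powr r / exp t) \<partial>lborel)"
  proof (intro nn_integral_cong)
    fix t :: real
    show "power_density f0 r (0 + 1 / \<mu> * t) * ennreal (exp (-\<mu> * (0 + 1 / \<mu> * t)))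
        = ennreal (f0 * \<mu> powr (-r)) * ennreal (indicator {0..} t * t powr r / exp t)"
      using mu f0 by (cases "t > 0")
        (auto simp: power_density_def indicator_def powr_divide powr_minus exp_minus ennreal_mult' [symmetric] field_simps)
  qed
  also have "\<dots> = ennreal (f0 * \<mu> powr (-r)) * ennreal (Gamma (r + 1))"
    using Gamma_conv_nn_integral_real[of "r + 1"] r by (subst nn_integral_cmult) auto
  also have "ennreal \<bar>1 / \<mu>\<bar> * (ennreal (f0 * \<mu> powr (-r)) * ennreal (Gamma (r + 1)))
      = ennreal (f0 * Gamma (r + 1) * \<mu> powr (-(r + 1)))"
  proof -
    have "\<mu> powr (-(r + 1)) = \<mu> powr (-r) / \<mu>"
      using mu by (simp add: powr_diff powr_minus_divide)
    then show ?thesis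
      using mu f0 r by (simp add: ennreal_mult' [symmetric] Gamma_real_pos)
  qed
  finally show ?thesis .
qed

section \<open>Two-sided bounds at finite n\<close>

lemma Gamma_le_exp_bound:
  fixes x \<theta> :: real
  assumes x: "x > 0" and th: "0 < \<theta>" "\<theta> < 1"
  shows "Gamma (x + 1) \<le> x powr x * exp (-x) * (1 - \<theta>) powr (-x) / \<theta>"
proof -
  define M where "M = x powr x * exp (-x) * (1 - \<theta>) powr (-x)"
  have Mpos: "M > 0" using x th by (simp add: M_def)
  have pt: "t powr x / exp t \<le> M * exp (-\<theta> * t)" if t: "t > 0" for t
  proof -
    define u where "u = (1 - \<theta>) * t / x"
    have u: "u > 0" using t th x by (simp add: u_def)
    have "ln u \<le> u - 1" using u by (rule ln_le_minus_one)
    moreover have "ln u = ln (1 - \<theta>) + ln t - ln x"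
      using t th x by (simp add: u_def ln_div ln_mult)
    ultimately have "x * (ln (1 - \<theta>) + ln t - ln x) \<le> x * (u - 1)"
      using x by (intro mult_left_mono) auto
    also have "x * (u - 1) = (1 - \<theta>) * t - x" using x by (simp add: u_def field_simps)
    finally have ineq: "x * ln t - t \<le> x * ln x - x - x * ln (1 - \<theta>) - \<theta> * t"
      by (simp add: algebra_simps)
    have "t powr x / exp t = exp (x * ln t - t)"
      using t by (simp add: powr_def exp_diff)
    also have "\<dots> \<le> exp (x * ln x - x - x * ln (1 - \<theta>) - \<theta> * t)"
      using ineq by simp
    also have "\<dots> = M * exp (-\<theta> * t)"
      using x th by (simp add: M_def powr_def exp_diff exp_minus field_simps exp_add)
    finally show ?thesis .
  qed
  have "ennreal (Gamma (x + 1)) = (\<integral>\<^sup>+t. ennreal (indicator {0..} t * t powr x / exp t) \<partial>lborel)"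
    using Gamma_conv_nn_integral_real[of "x + 1"] x by simp
  also have "\<dots> \<le> (\<integral>\<^sup>+t. ennreal M * (power_density 1 0 t * ennreal (exp (-\<theta> * t))) \<partial>lborel)"
  proof (intro nn_integral_mono)
    fix t :: real
    show "ennreal (indicator {0..} t * t powr x / exp t) \<le> ennreal M * (power_density 1 0 t * ennreal (exp (-\<theta> * t)))"
    proof (cases "t > 0")
      case True
      then show ?thesis using pt[OF True] Mpos by (simp add: power_density_def ennreal_mult' [symmetric])
    next
      case False
      have z: "indicator {0..} t * t powr x / exp t = (0::real)"
        using False by (cases "t = 0") (auto simp: indicator_def)
      show ?thesis by (simp only: z ennreal_0 zero_le)
    qed
  qed
  also have "\<dots> = ennreal M * ennreal (1 * Gamma (0 + 1) * \<theta> powr (-(0 + 1)))"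
  proof -
    have L: "(\<integral>\<^sup>+t. power_density 1 0 t * ennreal (exp (- (\<theta> * t))) \<partial>lborel) = ennreal (1 / \<theta>)"
      using nn_integral_power_density_exp[of 1 0 \<theta>] th by (simp add: powr_minus divide_inverse)
    show ?thesis using th by (subst nn_integral_cmult) (auto simp: L)
  qed
  also have "\<dots> = ennreal (M / \<theta>)"
    using th Mpos by (simp add: ennreal_mult' [symmetric] powr_minus divide_inverse)
  finally show ?thesis using Mpos th by (simp add: M_def)
qed

text \<open>The Chernoff estimate, with exponent \<open>\<lambda> = a + \<rho> n\<close>, of \<open>n\<close> times the probability that a sum of
  \<open>n - 1\<close> summands is at most \<open>1 - \<delta>\<close>; this bounds the event that some summand exceeds \<open>\<delta>\<close>.
  The base of the power bounds the Laplace transform at \<open>\<lambda>\<close> of the density: its first term comes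
  from the part below \<open>\<delta>\<close>, its second from the rest.\<close>

definition chernoff_error :: "real \<Rightarrow> real \<Rightarrow> real \<Rightarrow> real \<Rightarrow> nat \<Rightarrow> real" where
  "chernoff_error A \<rho> a \<delta> n = real n * exp ((a + \<rho> * real n) * (1 - \<delta>))
     * (A * (\<rho> * real n) powr (-\<rho>) + exp (-(a + \<rho> * real n) * \<delta>)) ^ (n - 1)"

lemma chernoff_error_nonneg: "\<rho> > 0 \<Longrightarrow> A > 0 \<Longrightarrow> chernoff_error A \<rho> a \<delta> n \<ge> 0"
  by (simp add: chernoff_error_def add_nonneg_nonneg)

lemma chernoff_error_Gamma_le:
  assumes rho: "\<rho> > 0" and A: "A > 0" and th: "0 < \<theta>" "\<theta> < 1" and n: "n = Suc m"
  shows "chernoff_error A \<rho> a \<delta> n * Gamma (\<rho> * real n + 1) / A ^ n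
    \<le> exp (a * (1 - \<delta>)) / (A * \<theta>) * real n * (\<rho> * real n) powr \<rho>
       * exp (real n * exp (-(a + \<rho> * real n) * \<delta>) * (\<rho> * real n) powr \<rho> / A)
       * exp (- (\<delta> + ln (1 - \<theta>)) * (\<rho> * real n))"
proof -
  define x where "x = \<rho> * real n"
  have x: "x > 0" using rho n by (simp add: x_def)
  define \<beta> where "\<beta> = exp (-(a + x) * \<delta>) * x powr \<rho> / A"
  have \<beta>: "\<beta> \<ge> 0" using A by (simp add: \<beta>_def)
  have "A * x powr (-\<rho>) + exp (-(a + x) * \<delta>) = A * x powr (-\<rho>) * (1 + \<beta>)"
    using A x by (simp add: \<beta>_def powr_minus field_simps)
  then have "(A * x powr (-\<rho>) + exp (-(a + x) * \<delta>)) ^ m = A ^ m * x powr (-\<rho> * real m) * (1 + \<beta>) ^ m"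
    using x by (simp add: power_mult_distrib powr_realpow' powr_powr flip: powr_realpow)
  also have "(1 + \<beta>) ^ m \<le> exp (real n * \<beta>)"
  proof -
    have "(1 + \<beta>) ^ m \<le> exp \<beta> ^ m"
      using \<beta> by (intro power_mono) (auto simp: exp_ge_add_one_self add_increasing)
    also have "\<dots> = exp (real m * \<beta>)" by (simp add: exp_of_nat_mult)
    also have "\<dots> \<le> exp (real n * \<beta>)" using \<beta> n by (intro exp_mono mult_right_mono) auto
    finally show ?thesis .
  qed
  finally have pow: "(A * x powr (-\<rho>) + exp (-(a + x) * \<delta>)) ^ m
      \<le> A ^ m * x powr (-\<rho> * real m) * exp (real n * \<beta>)"
    using A x by (simp add: mult_left_mono)
  have Gamma: "Gamma (x + 1) \<le> x powr x * exp (-x) * (1 - \<theta>) powr (-x) / \<theta>"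
    using Gamma_le_exp_bound[OF x th] .
  have "chernoff_error A \<rho> a \<delta> n * Gamma (x + 1) / A ^ n
      = real n * exp ((a + x) * (1 - \<delta>)) * (A * x powr (-\<rho>) + exp (-(a + x) * \<delta>)) ^ m * Gamma (x + 1) / (A * A ^ m)"
    by (simp add: chernoff_error_def x_def n)
  also have "\<dots> \<le> real n * exp ((a + x) * (1 - \<delta>)) * (A ^ m * x powr (-\<rho> * real m) * exp (real n * \<beta>))
      * (x powr x * exp (-x) * (1 - \<theta>) powr (-x) / \<theta>) / (A * A ^ m)"
    using A x Gamma pow by (intro divide_right_mono mult_mono mult_left_mono) (auto intro: Gamma_real_pos)
  also have "\<dots> = real n * (x powr (-\<rho> * real m) * x powr x) * exp (real n * \<beta>)
      * (exp ((a + x) * (1 - \<delta>)) * exp (-x) * (1 - \<theta>) powr (-x)) / (A * \<theta>)"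
    using A by (simp add: field_simps)
  also have "x powr (-\<rho> * real m) * x powr x = x powr \<rho>"
    by (simp add: x_def n flip: powr_add) (simp add: algebra_simps)
  also have "exp ((a + x) * (1 - \<delta>)) * exp (-x) * (1 - \<theta>) powr (-x)
      = exp (a * (1 - \<delta>)) * exp (- (\<delta> + ln (1 - \<theta>)) * x)"
    using th by (simp add: powr_def flip: exp_add) (simp add: algebra_simps)
  finally show ?thesis
    by (simp add: x_def \<beta>_def field_simps)
qed

lemma chernoff_error_negligible:
  assumes rho: "\<rho> > 0" and A: "A > 0" and d: "0 < \<delta>" "\<delta> \<le> 1/2"
  shows "((\<lambda>n. chernoff_error A \<rho> a \<delta> n * Gamma (\<rho> * real n + 1) / A ^ n) \<longlongrightarrow> 0) at_top"
proof -
  define \<theta> where "\<theta> = \<delta> / 2"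
  have th: "0 < \<theta>" "\<theta> < 1" using d by (auto simp: \<theta>_def)
  have L: "\<delta> + ln (1 - \<theta>) > 0"
  proof -
    have "- \<theta> - 2 * \<theta>\<^sup>2 \<le> ln (1 - \<theta>)"
      using d by (intro ln_one_minus_pos_lower_bound) (auto simp: \<theta>_def)
    moreover have "2 * \<theta>\<^sup>2 < \<theta>" using d by (simp add: \<theta>_def power2_eq_square)
    ultimately show ?thesis by (simp add: \<theta>_def)
  qed
  have "((\<lambda>n. real n * (\<rho> * real n) powr \<rho>
      * exp (real n * exp (-(a + \<rho> * real n) * \<delta>) * (\<rho> * real n) powr \<rho> / A)
       * exp (- L * (\<rho> * real n))) \<longlongrightarrow> 0) at_top" if "L > 0" for L
    using rho A d that by real_asymp
  from tendsto_mult_right_zero[OF this[OF L], of "exp (a * (1 - \<delta>)) / (A * \<theta>)"]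
  have "((\<lambda>n. exp (a * (1 - \<delta>)) / (A * \<theta>) * real n * (\<rho> * real n) powr \<rho>
       * exp (real n * exp (-(a + \<rho> * real n) * \<delta>) * (\<rho> * real n) powr \<rho> / A)
       * exp (- (\<delta> + ln (1 - \<theta>)) * (\<rho> * real n))) \<longlongrightarrow> 0) at_top"
    by (simp add: mult_ac)
  then show ?thesis
  proof (rule Lim_null_comparison[rotated])
    show "\<forall>\<^sub>F n in at_top. norm (chernoff_error A \<rho> a \<delta> n * Gamma (\<rho> * real n + 1) / A ^ n)
      \<le> exp (a * (1 - \<delta>)) / (A * \<theta>) * real n * (\<rho> * real n) powr \<rho>
         * exp (real n * exp (-(a + \<rho> * real n) * \<delta>) * (\<rho> * real n) powr \<rho> / A)
         * exp (- (\<delta> + ln (1 - \<theta>)) * (\<rho> * real n))"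
      using eventually_gt_at_top[of 0]
    proof eventually_elim
      case (elim n)
      then obtain m where "n = Suc m" using not0_implies_Suc by blast
      moreover have "Gamma (\<rho> * real n + 1) > 0"
        using rho by (intro Gamma_real_pos) (simp add: add_nonneg_pos)
      ultimately show ?case
        using chernoff_error_Gamma_le[OF rho A th] chernoff_error_nonneg[OF rho A] A by simp
    qed
  qed
qed

lemma chernoff_error_over_power_conv_cdf_tendsto_0:
  assumes "f0 > 0" "r > -1" "0 < \<delta>" "\<delta> \<le> 1/2"
  shows "((\<lambda>n. chernoff_error (f0 * Gamma (r + 1)) (r + 1) a \<delta> n / power_conv_cdf f0 r n 1) \<longlongrightarrow> 0) at_top"
  using chernoff_error_negligible[of "r + 1" "f0 * Gamma (r + 1)" \<delta> a] assms
  by (simp add: power_conv_cdf_at_1 Gamma_real_pos)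

lemma nn_integral_exp_le_of_power_bound:
  fixes dens :: "real \<Rightarrow> ennreal"
  assumes dm[measurable]: "dens \<in> borel_measurable borel" and supp: "\<And>y. y \<le> 0 \<Longrightarrow> dens y = 0"
    and tot: "(\<integral>\<^sup>+y. dens y \<partial>lborel) \<le> 1"
    and f0: "f0 > 0" and r: "r > -1"
    and cmp: "\<And>y. 0 < y \<Longrightarrow> y < \<delta> \<Longrightarrow> dens y \<le> power_density f0 r y * ennreal (exp (a * y))"
    and lam: "l \<ge> 0" and mu: "l - a > 0"
  shows "(\<integral>\<^sup>+y. dens y * ennreal (exp (-l * y)) \<partial>lborel)
          \<le> ennreal (f0 * Gamma (r + 1) * (l - a) powr (-(r + 1)) + exp (- l * \<delta>))"
proof -
  have "(\<integral>\<^sup>+y. dens y * ennreal (exp (-l * y)) \<partial>lborel)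
      \<le> (\<integral>\<^sup>+y. power_density f0 r y * ennreal (exp (-(l - a) * y))
          + ennreal (exp (- l * \<delta>)) * dens y \<partial>lborel)"
  proof (intro nn_integral_mono)
    fix y
    show "dens y * ennreal (exp (-l * y))
        \<le> power_density f0 r y * ennreal (exp (-(l - a) * y)) + ennreal (exp (- l * \<delta>)) * dens y"
    proof (cases "y \<le> 0")
      case True then show ?thesis by (simp add: supp)
    next
      case False
      show ?thesis
      proof (cases "y < \<delta>")
        case True
        have "dens y * ennreal (exp (-l * y)) \<le> power_density f0 r y * ennreal (exp (a * y)) * ennreal (exp (-l * y))"
          using cmp[of y] True False by (intro mult_right_mono) auto
        also have "\<dots> = power_density f0 r y * ennreal (exp (-(l - a) * y))"
          by (simp add: mult.assoc ennreal_exp_mult algebra_simps)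
        finally show ?thesis by (simp add: add_increasing2)
      next
        case False
        then have "-l * y \<le> -l * \<delta>" using lam by (simp add: mult_left_mono)
        then have "dens y * ennreal (exp (-l * y)) \<le> ennreal (exp (- l * \<delta>)) * dens y"
          by (simp add: mult.commute mult_left_mono)
        then show ?thesis by (simp add: add_increasing)
      qed
    qed
  qed
  also have "\<dots> = (\<integral>\<^sup>+y. power_density f0 r y * ennreal (exp (-(l - a) * y)) \<partial>lborel)
      + ennreal (exp (- l * \<delta>)) * (\<integral>\<^sup>+y. dens y \<partial>lborel)"
    by (simp add: nn_integral_add nn_integral_cmult)
  also have "\<dots> \<le> ennreal (f0 * Gamma (r + 1) * (l - a) powr (-(r + 1))) + ennreal (exp (- l * \<delta>)) * 1"
    using nn_integral_power_density_exp[of f0 r "l - a"] f0 r mu tot by (intro add_mono mult_left_mono) auto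
  also have "\<dots> = ennreal (f0 * Gamma (r + 1) * (l - a) powr (-(r + 1)) + exp (- l * \<delta>))"
    using f0 r by (simp add: Gamma_real_pos)
  finally show ?thesis .
qed

lemma diff_le_enn2real_of_le_add:
  assumes "ennreal x \<le> y + ennreal e" and "y < \<top>" and "e \<ge> 0"
  shows "x - e \<le> enn2real y"
proof -
  have "y = ennreal (enn2real y)"
    using assms(2) by simp
  with assms have "ennreal x \<le> ennreal (enn2real y + e)"
    by (metis ennreal_plus enn2real_nonneg)
  then show ?thesis
    using assms(3) by (subst (asm) ennreal_le_iff) auto
qed

lemma conv_cdf_upper_bound:
  fixes dens :: "real \<Rightarrow> ennreal"
  assumes dm[measurable]: "dens \<in> borel_measurable borel" and supp: "\<And>y. y \<le> 0 \<Longrightarrow> dens y = 0"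
    and tot: "(\<integral>\<^sup>+y. dens y \<partial>lborel) \<le> 1"
    and f0: "f0 > 0" and r: "r > -1" and eta: "0 < \<eta>" "\<eta> < 1"
    and cmp: "\<And>y. 0 < y \<Longrightarrow> y < \<delta> \<Longrightarrow> dens y \<le> power_density f0 r y * ennreal (exp (a * y))"
    and n: "n \<ge> 1" and lam: "a + (r + 1) * real n \<ge> 0"
  shows "enn2real (conv_cdf dens n 1) \<le> exp (a + \<bar>a\<bar> * \<eta>) * power_conv_cdf f0 r n 1
      + exp \<bar>a\<bar> * power_conv_cdf f0 r n (1 - \<eta>)
      + chernoff_error (f0 * Gamma (r + 1)) (r + 1) a \<delta> n"
proof -
  obtain m where m: "n = Suc m" using n by (cases n) auto
  define l where "l = a + (r + 1) * real n"
  define g where "g = (\<lambda>y. power_density f0 r y * ennreal (exp (a * y)))"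
  define h1 where "h1 = (\<lambda>y. dens y * indicator {..<\<delta>} y)"
  define K where "K = (\<integral>\<^sup>+y. dens y * indicator {\<delta>..1} y \<partial>lborel)"
  define \<Phi> where "\<Phi> = f0 * Gamma (r + 1) * ((r + 1) * real n) powr (-(r + 1)) + exp (-(a + (r + 1) * real n) * \<delta>)"
  have Phi0: "\<Phi> \<ge> 0" using f0 r by (simp add: \<Phi>_def Gamma_real_pos)
  have nonneg: "\<And>k s. power_conv_cdf f0 r k s \<ge> 0"
    using f0 r by (rule power_conv_cdf_nonneg)
  have split: "conv_cdf dens n 1 \<le> conv_cdf h1 n 1 + of_nat n * K * conv_cdf dens m (1 - \<delta>)"
    unfolding m h1_def K_def by (rule conv_cdf_split) (use supp in auto)
  have small_jumps: "conv_cdf h1 n 1 \<le> conv_cdf g n 1"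
  proof (rule conv_cdf_mono_density)
    fix y show "h1 y \<le> g y"
    proof (cases "0 < y \<and> y < \<delta>")
      case True then show ?thesis using cmp[of y] by (simp add: h1_def g_def)
    next
      case False
      then have "y \<le> 0 \<or> y \<ge> \<delta>" by auto
      then show ?thesis by (auto simp: h1_def g_def supp indicator_def)
    qed
  qed
  have tilted: "conv_cdf g n 1 \<le> ennreal (exp (a + \<bar>a\<bar> * \<eta>)) * ennreal (power_conv_cdf f0 r n 1)
      + ennreal (exp \<bar>a\<bar>) * ennreal (power_conv_cdf f0 r n (1 - \<eta>))"
    using conv_cdf_tilt_upper[of "power_density f0 r" \<eta> a n 1] eta
    by (simp add: g_def power_density_eq_0 conv_cdf_power_density[OF f0 r])
  have K_le: "K \<le> 1"
    using tot unfolding K_def by (rule order.trans[rotated]) (auto intro!: nn_integral_mono simp: indicator_def)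
  have chernoff: "conv_cdf dens m (1 - \<delta>)
      \<le> ennreal (exp (l * (1 - \<delta>))) * (\<integral>\<^sup>+y. dens y * ennreal (exp (-l * y)) \<partial>lborel) ^ m"
    using lam unfolding l_def by (intro conv_cdf_chernoff) auto
  have laplace: "(\<integral>\<^sup>+y. dens y * ennreal (exp (-l * y)) \<partial>lborel) \<le> ennreal \<Phi>"
  proof -
    have la: "l - a = (r + 1) * real n" by (simp add: l_def)
    have pos: "(r + 1) * real n > 0" using r n by simp
    have L: "(\<integral>\<^sup>+y. dens y * ennreal (exp (-l * y)) \<partial>lborel)
          \<le> ennreal (f0 * Gamma (r + 1) * (l - a) powr (-(r + 1)) + exp (- l * \<delta>))"
      by (rule nn_integral_exp_le_of_power_bound[OF dm supp tot f0 r]) (use cmp lam pos in \<open>auto simp: l_def\<close>)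
    then show ?thesis unfolding la by (simp add: \<Phi>_def l_def)
  qed
  have "conv_cdf dens n 1 \<le> (ennreal (exp (a + \<bar>a\<bar> * \<eta>)) * ennreal (power_conv_cdf f0 r n 1)
      + ennreal (exp \<bar>a\<bar>) * ennreal (power_conv_cdf f0 r n (1 - \<eta>)))
        + of_nat n * 1 * (ennreal (exp (l * (1 - \<delta>))) * ennreal \<Phi> ^ m)"
    by (intro order.trans[OF split] add_mono order.trans[OF small_jumps tilted] mult_mono
        order.trans[OF chernoff] mult_left_mono power_mono K_le laplace) auto
  also have "\<dots> = ennreal (exp (a + \<bar>a\<bar> * \<eta>) * power_conv_cdf f0 r n 1
      + exp \<bar>a\<bar> * power_conv_cdf f0 r n (1 - \<eta>)
        + real n * exp (l * (1 - \<delta>)) * \<Phi> ^ m)"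
    using nonneg Phi0 by (simp add: ennreal_mult' [symmetric] ennreal_power ennreal_of_nat_eq_real_of_nat mult.assoc)
  finally have "enn2real (conv_cdf dens n 1)
      \<le> exp (a + \<bar>a\<bar> * \<eta>) * power_conv_cdf f0 r n 1 + exp \<bar>a\<bar> * power_conv_cdf f0 r n (1 - \<eta>)
        + real n * exp (l * (1 - \<delta>)) * \<Phi> ^ m"
    using nonneg Phi0 by (intro enn2real_leI) auto
  then show ?thesis by (simp add: l_def \<Phi>_def m chernoff_error_def)
qed

lemma conv_cdf_lower_bound:
  fixes dens :: "real \<Rightarrow> ennreal"
  assumes [measurable]: "dens \<in> borel_measurable borel"
    and fin: "conv_cdf dens n 1 < \<top>"
    and f0: "f0 > 0" and r: "r > -1" and d: "\<delta> > 0" and eta: "0 < \<eta>" "\<eta> < 1"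
    and cmp: "\<And>y. 0 < y \<Longrightarrow> y < \<delta> \<Longrightarrow> power_density f0 r y * ennreal (exp (a * y)) \<le> dens y"
    and n: "n \<ge> 1" and lam: "a + (r + 1) * real n \<ge> 0"
  shows "exp (a - \<bar>a\<bar> * \<eta>) * power_conv_cdf f0 r n 1 - exp \<bar>a\<bar> * power_conv_cdf f0 r n (1 - \<eta>)
      - exp \<bar>a\<bar> * power_conv_cdf f0 r 1 1 * chernoff_error (f0 * Gamma (r + 1)) (r + 1) a \<delta> n
      \<le> enn2real (conv_cdf dens n 1)"
proof -
  obtain m where m: "n = Suc m" using n by (cases n) auto
  define l where "l = a + (r + 1) * real n"
  define g where "g = (\<lambda>y. power_density f0 r y * ennreal (exp (a * y)))"
  define h1 where "h1 = (\<lambda>y. g y * indicator {..<\<delta>} y)"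
  define K where "K = (\<integral>\<^sup>+y. g y * indicator {\<delta>..1} y \<partial>lborel)"
  define \<Phi> where "\<Phi> = f0 * Gamma (r + 1) * ((r + 1) * real n) powr (-(r + 1)) + exp (-(a + (r + 1) * real n) * \<delta>)"
  have gm[measurable]: "g \<in> borel_measurable borel" unfolding g_def by measurable
  have gsupp: "\<And>y. y \<le> 0 \<Longrightarrow> g y = 0" by (simp add: g_def power_density_eq_0)
  have Phi0: "\<Phi> \<ge> 0" using f0 r by (simp add: \<Phi>_def Gamma_real_pos)
  have nonneg: "\<And>k s. power_conv_cdf f0 r k s \<ge> 0"
    using f0 r by (rule power_conv_cdf_nonneg)
  have tilted: "ennreal (exp (a - \<bar>a\<bar> * \<eta>)) * ennreal (power_conv_cdf f0 r n 1)
      \<le> conv_cdf g n 1 + ennreal (exp \<bar>a\<bar>) * ennreal (power_conv_cdf f0 r n (1 - \<eta>))"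
    using conv_cdf_tilt_lower[of "power_density f0 r" \<eta> a 1 n] eta
    by (simp add: g_def power_density_eq_0 conv_cdf_power_density[OF f0 r])
  have split: "conv_cdf g n 1 \<le> conv_cdf h1 n 1 + of_nat n * K * conv_cdf g m (1 - \<delta>)"
    unfolding m h1_def K_def by (rule conv_cdf_split) (use gsupp in auto)
  have small_jumps: "conv_cdf h1 n 1 \<le> conv_cdf dens n 1"
  proof (rule conv_cdf_mono_density)
    fix y show "h1 y \<le> dens y"
    proof (cases "0 < y \<and> y < \<delta>")
      case True then show ?thesis using cmp[of y] by (simp add: h1_def g_def)
    next
      case False
      then have "y \<le> 0 \<or> y \<ge> \<delta>" by auto
      then show ?thesis by (auto simp: h1_def gsupp indicator_def)
    qed
  qed
  have K_le: "K \<le> ennreal (exp \<bar>a\<bar> * power_conv_cdf f0 r 1 1)"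
  proof -
    have "K \<le> (\<integral>\<^sup>+y. ennreal (exp \<bar>a\<bar>)
        * (power_density f0 r y * conv_cdf (power_density f0 r) 0 (1 - y)) \<partial>lborel)"
      unfolding K_def
    proof (intro nn_integral_mono)
      fix y
      show "g y * indicator {\<delta>..1} y
          \<le> ennreal (exp \<bar>a\<bar>) * (power_density f0 r y * conv_cdf (power_density f0 r) 0 (1 - y))"
      proof (cases "\<delta> \<le> y \<and> y \<le> 1")
        case True
        have "a * y \<le> \<bar>a\<bar> * y" using True d by (intro mult_right_mono) auto
        also have "\<dots> \<le> \<bar>a\<bar>" using True by (simp add: mult_left_le)
        finally have ay: "a * y \<le> \<bar>a\<bar>" .
        have e: "ennreal (exp (a * y)) \<le> ennreal (exp \<bar>a\<bar>)" using ay by (intro ennreal_leI) simp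
        have "g y * indicator {\<delta>..1} y = power_density f0 r y * ennreal (exp (a * y))" using True by (simp add: g_def indicator_def)
        also have "\<dots> \<le> power_density f0 r y * ennreal (exp \<bar>a\<bar>)" by (intro mult_left_mono e) simp
        also have "\<dots> = ennreal (exp \<bar>a\<bar>) * (power_density f0 r y * conv_cdf (power_density f0 r) 0 (1 - y))"
          using True by (simp add: mult.commute indicator_def)
        finally show ?thesis .
      next
        case False
        then have "indicator {\<delta>..1} y = (0::ennreal)" by (simp add: indicator_def)
        then show ?thesis by simp
      qed
    qed
    also have "\<dots> = ennreal (exp \<bar>a\<bar>) * conv_cdf (power_density f0 r) 1 1"
      by (subst nn_integral_cmult) auto
    also have "\<dots> = ennreal (exp \<bar>a\<bar> * power_conv_cdf f0 r 1 1)"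
      by (subst conv_cdf_power_density[OF f0 r]) (simp add: ennreal_mult')
    finally show ?thesis .
  qed
  have chernoff: "conv_cdf g m (1 - \<delta>)
      \<le> ennreal (exp (l * (1 - \<delta>))) * (\<integral>\<^sup>+y. g y * ennreal (exp (-l * y)) \<partial>lborel) ^ m"
    using lam unfolding l_def by (intro conv_cdf_chernoff) auto
  have laplace: "(\<integral>\<^sup>+y. g y * ennreal (exp (-l * y)) \<partial>lborel) \<le> ennreal \<Phi>"
  proof -
    have pos: "(r + 1) * real n > 0" using r n by simp
    have "(\<integral>\<^sup>+y. g y * ennreal (exp (-l * y)) \<partial>lborel)
        = (\<integral>\<^sup>+y. power_density f0 r y * ennreal (exp (- ((r + 1) * real n) * y)) \<partial>lborel)"
      by (intro nn_integral_cong) (simp add: g_def mult.assoc ennreal_exp_mult l_def algebra_simps)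
    also have "\<dots> = ennreal (f0 * Gamma (r + 1) * ((r + 1) * real n) powr (-(r + 1)))"
      using f0 r pos by (intro nn_integral_power_density_exp) auto
    also have "\<dots> \<le> ennreal \<Phi>" unfolding \<Phi>_def by (intro ennreal_leI) simp
    finally show ?thesis .
  qed
  have "ennreal (exp (a - \<bar>a\<bar> * \<eta>)) * ennreal (power_conv_cdf f0 r n 1)
      \<le> (conv_cdf dens n 1 + of_nat n * ennreal (exp \<bar>a\<bar> * power_conv_cdf f0 r 1 1)
          * (ennreal (exp (l * (1 - \<delta>))) * ennreal \<Phi> ^ m))
      + ennreal (exp \<bar>a\<bar>) * ennreal (power_conv_cdf f0 r n (1 - \<eta>))"
    by (intro order.trans[OF tilted] add_mono order.trans[OF split] order.trans[OF small_jumps] mult_mono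
        order.trans[OF chernoff] mult_left_mono power_mono small_jumps K_le laplace order.refl) auto
  also have "\<dots> = conv_cdf dens n 1 + ennreal (exp \<bar>a\<bar> * power_conv_cdf f0 r 1 1
      * (real n * exp (l * (1 - \<delta>)) * \<Phi> ^ m) + exp \<bar>a\<bar> * power_conv_cdf f0 r n (1 - \<eta>))"
    using nonneg Phi0 by (simp add: ennreal_mult' [symmetric] ennreal_power ennreal_of_nat_eq_real_of_nat mult_ac add.assoc)
  finally have "ennreal (exp (a - \<bar>a\<bar> * \<eta>) * power_conv_cdf f0 r n 1) \<le> conv_cdf dens n 1
      + ennreal (exp \<bar>a\<bar> * power_conv_cdf f0 r 1 1 * (real n * exp (l * (1 - \<delta>)) * \<Phi> ^ m)
          + exp \<bar>a\<bar> * power_conv_cdf f0 r n (1 - \<eta>))"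
    by (simp add: ennreal_mult')
  then have "exp (a - \<bar>a\<bar> * \<eta>) * power_conv_cdf f0 r n 1
      - (exp \<bar>a\<bar> * power_conv_cdf f0 r 1 1 * (real n * exp (l * (1 - \<delta>)) * \<Phi> ^ m)
          + exp \<bar>a\<bar> * power_conv_cdf f0 r n (1 - \<eta>))
      \<le> enn2real (conv_cdf dens n 1)"
    by (rule diff_le_enn2real_of_le_add) (use fin nonneg Phi0 in auto)
  then show ?thesis by (simp add: l_def \<Phi>_def m chernoff_error_def algebra_simps)
qed

section \<open>Asymptotics\<close>

lemma eventually_at_right_0_witness:
  assumes "\<forall>\<^sub>F x in at_right (0::real). P x"
  shows "\<exists>x. 0 < x \<and> x < 1 \<and> P x"
proof -
  obtain b where "b > 0" and "\<And>x. 0 < x \<Longrightarrow> x < b \<Longrightarrow> P x"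
    using assms unfolding eventually_at_right_field by auto
  then show ?thesis by (intro exI[of _ "min (b / 2) (1 / 2)"]) auto
qed

lemma eventually_at_right_0_interval:
  assumes "\<forall>\<^sub>F x in at_right (0::real). P x"
  obtains \<delta> where "0 < \<delta>" "\<delta> \<le> 1/2" "\<And>x. 0 < x \<Longrightarrow> x < \<delta> \<Longrightarrow> P x"
proof -
  obtain b where "b > 0" and "\<And>x. 0 < x \<Longrightarrow> x < b \<Longrightarrow> P x"
    using assms unfolding eventually_at_right_field by auto
  then show ?thesis by (intro that[of "min b (1/2)"]) auto
qed

lemma powr_mult_real_tendsto_0:
  fixes b \<rho> :: real
  assumes "0 < b" "b < 1" "\<rho> > 0"
  shows "((\<lambda>n. b powr (\<rho> * real n)) \<longlongrightarrow> 0) at_top"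
proof -
  have "b powr (\<rho> * real n) = (b powr \<rho>) ^ n" for n
    using assms by (simp add: powr_powr [symmetric] powr_realpow)
  moreover have "(\<lambda>n. (b powr \<rho>) ^ n) \<longlonglongrightarrow> 0"
    using assms by (intro LIMSEQ_power_zero) (use powr_less_mono2[of \<rho> b 1] in simp)
  ultimately show ?thesis by simp
qed

lemma conv_cdf_ratio_upper:
  fixes dens :: "real \<Rightarrow> ennreal"
  assumes dm[measurable]: "dens \<in> borel_measurable borel" and supp: "\<And>y. y \<le> 0 \<Longrightarrow> dens y = 0"
    and tot: "(\<integral>\<^sup>+y. dens y \<partial>lborel) \<le> 1" and f0: "f0 > 0" and r: "r > -1"
    and near0: "\<forall>\<^sub>F y in at_right 0. dens y \<le> power_density f0 r y * ennreal (exp (a * y))"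
    and b: "exp a < b"
  shows "\<forall>\<^sub>F n in at_top. enn2real (conv_cdf dens n 1) / power_conv_cdf f0 r n 1 < b"
proof -
  define \<epsilon> where "\<epsilon> = b - exp a"
  have \<epsilon>: "\<epsilon> > 0" using b by (simp add: \<epsilon>_def)
  obtain \<delta> where \<delta>: "0 < \<delta>" "\<delta> \<le> 1/2"
    and cmp: "\<And>y. 0 < y \<Longrightarrow> y < \<delta> \<Longrightarrow> dens y \<le> power_density f0 r y * ennreal (exp (a * y))"
    using eventually_at_right_0_interval[OF near0] by blast
  have "((\<lambda>\<eta>. exp (a + \<bar>a\<bar> * \<eta>)) \<longlongrightarrow> exp a) (at_right 0)"
    by (auto intro!: tendsto_eq_intros)
  then have "\<forall>\<^sub>F \<eta> in at_right 0. exp (a + \<bar>a\<bar> * \<eta>) < exp a + \<epsilon> / 2"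
    using \<epsilon> by (intro order_tendstoD) auto
  then obtain \<eta> where \<eta>: "0 < \<eta>" "\<eta> < 1" and main: "exp (a + \<bar>a\<bar> * \<eta>) < exp a + \<epsilon> / 2"
    using eventually_at_right_0_witness by blast
  define err where "err n = exp \<bar>a\<bar> * (1 - \<eta>) powr ((r + 1) * real n)
    + chernoff_error (f0 * Gamma (r + 1)) (r + 1) a \<delta> n / power_conv_cdf f0 r n 1" for n
  have "(err \<longlongrightarrow> 0) at_top"
    unfolding err_def using \<eta> r f0 \<delta>
    by (intro tendsto_add_zero tendsto_mult_right_zero powr_mult_real_tendsto_0
        chernoff_error_over_power_conv_cdf_tendsto_0) auto
  then have "\<forall>\<^sub>F n in at_top. err n < \<epsilon> / 2"
    using \<epsilon> by (intro order_tendstoD) auto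
  moreover have "\<forall>\<^sub>F n in at_top. a + (r + 1) * real n \<ge> 0"
    using r by real_asymp
  ultimately show ?thesis
    using eventually_ge_at_top[of 1]
  proof eventually_elim
    case (elim n)
    have Q: "power_conv_cdf f0 r n 1 > 0" using f0 r by (rule power_conv_cdf_at_1_pos)
    have "enn2real (conv_cdf dens n 1) \<le> exp (a + \<bar>a\<bar> * \<eta>) * power_conv_cdf f0 r n 1 + err n * power_conv_cdf f0 r n 1"
      using conv_cdf_upper_bound[OF dm supp tot f0 r \<eta> cmp] elim \<eta> Q
      by (simp add: err_def power_conv_cdf_scale[of "1 - \<eta>"] algebra_simps)
    then have "enn2real (conv_cdf dens n 1) / power_conv_cdf f0 r n 1 \<le> exp (a + \<bar>a\<bar> * \<eta>) + err n"
      using Q by (simp add: field_simps)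
    with main elim show ?case unfolding \<epsilon>_def by argo
  qed
qed

lemma conv_cdf_ratio_lower:
  fixes dens :: "real \<Rightarrow> ennreal"
  assumes dm[measurable]: "dens \<in> borel_measurable borel"
    and tot: "(\<integral>\<^sup>+y. dens y \<partial>lborel) \<le> 1" and f0: "f0 > 0" and r: "r > -1"
    and near0: "\<forall>\<^sub>F y in at_right 0. power_density f0 r y * ennreal (exp (a * y)) \<le> dens y"
    and b: "b < exp a"
  shows "\<forall>\<^sub>F n in at_top. b < enn2real (conv_cdf dens n 1) / power_conv_cdf f0 r n 1"
proof -
  define \<epsilon> where "\<epsilon> = exp a - b"
  have \<epsilon>: "\<epsilon> > 0" using b by (simp add: \<epsilon>_def)
  obtain \<delta> where \<delta>: "0 < \<delta>" "\<delta> \<le> 1/2"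
    and cmp: "\<And>y. 0 < y \<Longrightarrow> y < \<delta> \<Longrightarrow> power_density f0 r y * ennreal (exp (a * y)) \<le> dens y"
    using eventually_at_right_0_interval[OF near0] by blast
  have "((\<lambda>\<eta>. exp (a - \<bar>a\<bar> * \<eta>)) \<longlongrightarrow> exp a) (at_right 0)"
    by (auto intro!: tendsto_eq_intros)
  then have "\<forall>\<^sub>F \<eta> in at_right 0. exp a - \<epsilon> / 2 < exp (a - \<bar>a\<bar> * \<eta>)"
    using \<epsilon> by (intro order_tendstoD) auto
  then obtain \<eta> where \<eta>: "0 < \<eta>" "\<eta> < 1" and main: "exp a - \<epsilon> / 2 < exp (a - \<bar>a\<bar> * \<eta>)"
    using eventually_at_right_0_witness by blast
  define err where "err n = exp \<bar>a\<bar> * (1 - \<eta>) powr ((r + 1) * real n) + exp \<bar>a\<bar> * power_conv_cdf f0 r 1 1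
    * (chernoff_error (f0 * Gamma (r + 1)) (r + 1) a \<delta> n / power_conv_cdf f0 r n 1)" for n
  have "(err \<longlongrightarrow> 0) at_top"
    unfolding err_def using \<eta> r f0 \<delta>
    by (intro tendsto_add_zero tendsto_mult_right_zero powr_mult_real_tendsto_0
        chernoff_error_over_power_conv_cdf_tendsto_0) auto
  then have "\<forall>\<^sub>F n in at_top. err n < \<epsilon> / 2"
    using \<epsilon> by (intro order_tendstoD) auto
  moreover have "\<forall>\<^sub>F n in at_top. a + (r + 1) * real n \<ge> 0"
    using r by real_asymp
  ultimately show ?thesis
    using eventually_ge_at_top[of 1]
  proof eventually_elim
    case (elim n)
    have Q: "power_conv_cdf f0 r n 1 > 0" using f0 r by (rule power_conv_cdf_at_1_pos)
    have fin: "conv_cdf dens n 1 < \<top>"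
      using conv_cdf_le_1[OF tot] by (metis ennreal_one_less_top order.strict_trans1)
    have "exp (a - \<bar>a\<bar> * \<eta>) * power_conv_cdf f0 r n 1 - err n * power_conv_cdf f0 r n 1 \<le> enn2real (conv_cdf dens n 1)"
      using conv_cdf_lower_bound[OF dm fin f0 r \<delta>(1) \<eta> cmp] elim \<eta> Q
      by (simp add: err_def power_conv_cdf_scale[of "1 - \<eta>"] algebra_simps)
    then have "exp (a - \<bar>a\<bar> * \<eta>) - err n \<le> enn2real (conv_cdf dens n 1) / power_conv_cdf f0 r n 1"
      using Q by (simp add: field_simps)
    with main elim show ?case unfolding \<epsilon>_def by argo
  qed
qed

theorem conv_cdf_asymp_equiv:
  fixes dens :: "real \<Rightarrow> ennreal"
  assumes dm[measurable]: "dens \<in> borel_measurable borel" and supp: "\<And>y. y \<le> 0 \<Longrightarrow> dens y = 0"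
    and tot: "(\<integral>\<^sup>+y. dens y \<partial>lborel) \<le> 1" and f0: "f0 > 0" and r: "r > -1"
    and near0: "\<And>\<eta>. \<eta> > 0 \<Longrightarrow> \<forall>\<^sub>F y in at_right 0.
      power_density f0 r y * ennreal (exp ((c - \<eta>) * y)) \<le> dens y
      \<and> dens y \<le> power_density f0 r y * ennreal (exp ((c + \<eta>) * y))"
  shows "(\<lambda>n. enn2real (conv_cdf dens n 1)) \<sim>[at_top] (\<lambda>n. exp c * power_conv_cdf f0 r n 1)"
proof -
  have "((\<lambda>n. enn2real (conv_cdf dens n 1) / power_conv_cdf f0 r n 1) \<longlongrightarrow> exp c) at_top"
  proof (rule order_tendstoI)
    fix b assume "exp c < b"
    moreover have "((\<lambda>\<eta>. exp (c + \<eta>)) \<longlongrightarrow> exp c) (at_right 0)"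
      by (auto intro!: tendsto_eq_intros)
    ultimately obtain \<eta> where "0 < \<eta>" "exp (c + \<eta>) < b"
      using order_tendstoD(2) eventually_at_right_0_witness by blast
    then show "\<forall>\<^sub>F n in at_top. enn2real (conv_cdf dens n 1) / power_conv_cdf f0 r n 1 < b"
      using near0[of \<eta>] by (intro conv_cdf_ratio_upper[OF dm supp tot f0 r]) (auto elim: eventually_mono)
  next
    fix b assume "b < exp c"
    moreover have "((\<lambda>\<eta>. exp (c - \<eta>)) \<longlongrightarrow> exp c) (at_right 0)"
      by (auto intro!: tendsto_eq_intros)
    ultimately obtain \<eta> where "0 < \<eta>" "b < exp (c - \<eta>)"
      using order_tendstoD(1) eventually_at_right_0_witness by blast
    then show "\<forall>\<^sub>F n in at_top. b < enn2real (conv_cdf dens n 1) / power_conv_cdf f0 r n 1"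
      using near0[of \<eta>] by (intro conv_cdf_ratio_lower[OF dm tot f0 r]) (auto elim: eventually_mono)
  qed
  then show ?thesis by (rule asymp_equivI'_const) simp
qed

section \<open>Sums of independent random variables\<close>

lemma (in prob_space) emeasure_sum_le_eq_conv_cdf:
  fixes X :: "nat \<Rightarrow> 'a \<Rightarrow> real"
  assumes ind: "indep_vars (\<lambda>_. borel) X UNIV"
    and distr: "\<And>i. distributed M lborel (X i) dens"
  shows "emeasure M {\<omega> \<in> space M. (\<Sum>i\<in>{1..n}. X i \<omega>) \<le> s} = conv_cdf dens n s"
proof (induction n arbitrary: s)
  case 0
  show ?case by (cases "0 \<le> s") (auto simp: emeasure_space_1)
next
  case (Suc n)
  have dm[measurable]: "dens \<in> borel_measurable borel"
    using distributed_borel_measurable[OF distr[of 0]] by simp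
  have Xm[measurable]: "\<And>i. X i \<in> borel_measurable M"
    using distributed_measurable[OF distr] by simp
  define S where "S = (\<lambda>\<omega>. \<Sum>i\<in>{1..n}. X i \<omega>)"
  have Sm[measurable]: "S \<in> borel_measurable M" unfolding S_def by measurable
  have indep: "indep_var borel (X (Suc n)) borel S"
    unfolding S_def
    by (rule indep_vars_sum) (auto intro: indep_vars_subset[OF ind])
  have "emeasure M {\<omega> \<in> space M. (\<Sum>i\<in>{1..Suc n}. X i \<omega>) \<le> s}
      = emeasure (distr M borel (\<lambda>\<omega>. X (Suc n) \<omega> + S \<omega>)) {..s}"
  proof -
    have set: "{\<omega> \<in> space M. (\<Sum>i\<in>{1..Suc n}. X i \<omega>) \<le> s}
        = (\<lambda>\<omega>. X (Suc n) \<omega> + S \<omega>) -` {..s} \<inter> space M"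
      by (auto simp: S_def add.commute)
    have "(\<lambda>\<omega>. X (Suc n) \<omega> + S \<omega>) \<in> measurable M borel" by measurable
    then show ?thesis using set emeasure_distr[of "\<lambda>\<omega>. X (Suc n) \<omega> + S \<omega>" M borel "{..s}"] by simp
  qed
  also have "\<dots> = emeasure (distr M borel (X (Suc n)) \<star> distr M borel S) {..s}"
    by (subst sum_indep_random_variable[OF indep]) auto
  also have "\<dots> = (\<integral>\<^sup>+x. emeasure (distr M borel S) {a. a + x \<in> {..s}} \<partial>distr M borel (X (Suc n)))"
    by (rule convolution_emeasure) (auto intro!: prob_space.finite_measure prob_space_distr)
  also have "\<dots> = (\<integral>\<^sup>+x. conv_cdf dens n (s - x) \<partial>distr M borel (X (Suc n)))"
  proof (intro nn_integral_cong)
    fix x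
    have "emeasure (distr M borel S) {a. a + x \<in> {..s}} = emeasure M {\<omega> \<in> space M. S \<omega> \<le> s - x}"
    proof -
      have "S \<in> measurable M borel" by measurable
      moreover have "S -` {a. a + x \<in> {..s}} \<inter> space M = {\<omega> \<in> space M. S \<omega> \<le> s - x}" by auto
      ultimately show ?thesis using emeasure_distr[of S M borel "{a. a + x \<in> {..s}}"] by simp
    qed
    then show "emeasure (distr M borel S) {a. a + x \<in> {..s}} = conv_cdf dens n (s - x)"
      using Suc[of "s - x"] by (simp add: S_def)
  qed
  also have "\<dots> = (\<integral>\<^sup>+\<omega>. conv_cdf dens n (s - X (Suc n) \<omega>) \<partial>M)"
    by (subst nn_integral_distr) auto
  also have "\<dots> = (\<integral>\<^sup>+x. conv_cdf dens n (s - x) \<partial>distr M lborel (X (Suc n)))"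
    by (subst nn_integral_distr) auto
  also have "\<dots> = (\<integral>\<^sup>+x. conv_cdf dens n (s - x) \<partial>density lborel dens)"
    using distributed_distr_eq_density[OF distr] by simp
  also have "\<dots> = (\<integral>\<^sup>+x. dens x * conv_cdf dens n (s - x) \<partial>lborel)"
    by (subst nn_integral_density) auto
  finally show ?case by simp
qed

lemma (in prob_space) nn_integral_distributed_density:
  assumes "distributed M N X f"
  shows "(\<integral>\<^sup>+x. f x \<partial>N) = 1"
proof -
  have "X -` space N \<inter> space M = space M"
    using distributed_measurable[OF assms] by (auto dest: measurable_space)
  then show ?thesis
    using distributed_emeasure[OF assms, of "space N"] by (simp add: emeasure_space_1 nn_integral_set_ennreal)
qed

lemma eventually_exp_bounds_of_derivative:
  fixes f :: "real \<Rightarrow> real"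
  assumes df: "(f has_real_derivative f'0) (at 0 within {0..})" and f0: "f 0 > 0" and "\<eta> > 0"
  shows "\<forall>\<^sub>F t in at_right 0.
           f 0 * exp ((f'0 / f 0 - \<eta>) * t) \<le> f t \<and> f t \<le> f 0 * exp ((f'0 / f 0 + \<eta>) * t)"
proof -
  have "((\<lambda>t. ln (f t)) has_real_derivative f'0 / f 0) (at 0 within {0..})"
    using df f0 by (auto intro!: derivative_eq_intros)
  then have "((\<lambda>t. (ln (f t) - ln (f 0)) / (t - 0)) \<longlongrightarrow> f'0 / f 0) (at 0 within {0..})"
    by (simp add: has_field_derivative_iff)
  then have "((\<lambda>t. (ln (f t) - ln (f 0)) / t) \<longlongrightarrow> f'0 / f 0) (at_right 0)"
    by (auto elim: tendsto_within_subset)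
  then have quot: "\<forall>\<^sub>F t in at_right 0. \<bar>(ln (f t) - ln (f 0)) / t - f'0 / f 0\<bar> < \<eta>"
    using \<open>\<eta> > 0\<close> by (auto dest: tendstoD simp: dist_real_def)
  have "(f \<longlongrightarrow> f 0) (at_right 0)"
    using DERIV_continuous[OF df] by (auto simp: continuous_within elim: tendsto_within_subset)
  then have pos: "\<forall>\<^sub>F t in at_right 0. f t > 0"
    using f0 by (rule order_tendstoD)
  show ?thesis
    using quot pos eventually_at_right_less[of 0]
  proof eventually_elim
    case (elim t)
    then have "(f'0 / f 0 - \<eta>) * t \<le> ln (f t) - ln (f 0)" "ln (f t) - ln (f 0) \<le> (f'0 / f 0 + \<eta>) * t"
      by (auto simp: abs_less_iff field_simps)
    moreover have "f t / f 0 = exp (ln (f t) - ln (f 0))"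
      using elim f0 by (simp add: exp_diff)
    ultimately have "exp ((f'0 / f 0 - \<eta>) * t) \<le> f t / f 0" "f t / f 0 \<le> exp ((f'0 / f 0 + \<eta>) * t)"
      by simp_all
    then show ?case
      using f0 by (simp add: field_simps)
  qed
qed

lemma continuous_within_Ici_nonneg:
  fixes f :: "real \<Rightarrow> real"
  assumes "continuous (at x within {x..}) f" and "\<And>t. t > x \<Longrightarrow> f t \<ge> 0"
  shows "f x \<ge> 0"
proof -
  have "(f \<longlongrightarrow> f x) (at_right x)"
    using assms(1) by (auto simp: continuous_within elim: tendsto_within_subset)
  moreover have "\<forall>\<^sub>F t in at_right x. f t \<ge> 0"
    using eventually_at_right_less by (rule eventually_mono) (rule assms(2))
  ultimately show ?thesis
    by (rule tendsto_lowerbound) simp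
qed

theorem corollary5p2:
  fixes M :: "'a measure" and X :: "nat \<Rightarrow> 'a \<Rightarrow> real"
    and k f :: "real \<Rightarrow> real" and r f'0 :: real
  assumes "prob_space M"
    and "prob_space.indep_vars M (\<lambda>_. borel) X UNIV"
    and "\<And>i. distributed M lborel (X i) (\<lambda>t. if t > 0 then ennreal (k t) else 0)"
    and "\<And>t. t > 0 \<Longrightarrow> k t \<ge> 0"
    and "r > -1"
    and "\<And>t. t > 0 \<Longrightarrow> k t = t powr r * f t"
    and "f 0 \<noteq> 0"
    and "(f has_real_derivative f'0) (at 0 within {0..})"
  shows "(\<lambda>n::nat. measure M {\<omega> \<in> space M. (\<Sum>i\<in>{1..n}. X i \<omega>) \<le> 1})
           \<sim>[at_top] (\<lambda>n. (f 0 * Gamma (r + 1)) ^ n * exp (f'0 / f 0)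
                          / Gamma ((r + 1) * real n + 1))"
proof -
  interpret prob_space M by fact
  define dens where "dens t = (if t > 0 then ennreal (k t) else 0)" for t
  have distr: "distributed M lborel (X i) dens" for i
    using assms(3) by (simp add: dens_def[abs_def])
  have "f t \<ge> 0" if "t > 0" for t
    using assms(4,6)[OF that] that by (simp add: zero_le_mult_iff)
  then have "f 0 \<ge> 0"
    by (intro continuous_within_Ici_nonneg[OF DERIV_continuous[OF assms(8)]])
  with assms(7) have f0: "f 0 > 0" by simp
  have near0: "\<forall>\<^sub>F y in at_right 0.
      power_density (f 0) r y * ennreal (exp ((f'0 / f 0 - \<eta>) * y)) \<le> dens y
      \<and> dens y \<le> power_density (f 0) r y * ennreal (exp ((f'0 / f 0 + \<eta>) * y))" if "\<eta> > 0" for \<eta>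
    using eventually_exp_bounds_of_derivative[OF assms(8) f0 that] eventually_at_right_less
  proof eventually_elim
    case (elim y)
    then show ?case
      using f0 by (auto simp: dens_def power_density_def assms(6) ennreal_mult'[symmetric] mult.assoc
          intro!: ennreal_leI mult_left_mono)
  qed
  have "(\<lambda>n. enn2real (conv_cdf dens n 1)) \<sim>[at_top] (\<lambda>n. exp (f'0 / f 0) * power_conv_cdf (f 0) r n 1)"
    using distributed_borel_measurable[OF distr[of 0]] nn_integral_distributed_density[OF distr[of 0]] f0 assms(5) near0
    by (intro conv_cdf_asymp_equiv) (auto simp: dens_def)
  moreover have "measure M {\<omega> \<in> space M. (\<Sum>i\<in>{1..n}. X i \<omega>) \<le> 1} = enn2real (conv_cdf dens n 1)" for n
    by (simp only: measure_def emeasure_sum_le_eq_conv_cdf[OF assms(2) distr])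
  ultimately show ?thesis
    by (simp add: power_conv_cdf_at_1 mult_ac)
qed

end
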